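(* Let $\Omega\subset\mathbb{C}^d$ be a complete Kobayashi hyperbolic domain and let $\gamma:[0,\infty)\to\Omega$ be a geodesic ray. Suppose $x,y\in\partial\Omega$ and there are sequences $t_n\to\infty$, $s_n\to\infty$ with $\gamma(t_n)\to x$ and $\gamma(s_n)\to y$. Then for every $R>0$ and every $o\in\Omega$, $y\in\overline{H^b_o(x,R)}$. In particular, $x\in\overline{H^b_o(x,R)}$ for all $R>0$, $o\in\Omega$.
   Context: For a Kobayashi hyperbolic domain $\Omega\subset\mathbb{C}^d$ with Kobayashi distance $\mathsf{k}_\Omega$, $x\in\partial\Omega$, $o\in\Omega$, $R>0$: $H^b_o(x,R)=\{z\in\Omega:\liminf_{w\to x}(\mathsf{k}_\Omega(z,w)-\mathsf{k}_\Omega(o,w))<\tfrac12\log R\}$; closure in $\mathbb{C}^d$. Complete Kobayashi hyperbolic: $(\Omega,\mathsf{k}_\Omega)$ is Cauchy complete. A geodesic ray is a map $\gamma:[0,\infty)\to\Omega$ with $\mathsf{k}_\Omega(\gamma(s),\gamma(t))=|s-t|$ for all $s,t\ge0$. *)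

theory Defs
  imports "HOL-Analysis.Analysis"
begin

text \<open>Points of C^d are vectors complex^'n, with 'n a finite index type (d = CARD('n)).\<close>

definition domain :: "(complex^'n) set \<Rightarrow> bool" where
  "domain \<Omega> \<longleftrightarrow> open \<Omega> \<and> connected \<Omega> \<and> \<Omega> \<noteq> {}"

definition analytic_discs :: "(complex^'n) set \<Rightarrow> (complex \<Rightarrow> complex^'n) set" where
  "analytic_discs \<Omega> = {f. (\<forall>i. (\<lambda>\<zeta>. f \<zeta> $ i) holomorphic_on ball 0 1) \<and> f ` ball 0 1 \<subseteq> \<Omega>}"

text \<open>Kobayashi--Lempert function; Poincare distance on the disc
  k_D(0,zeta) = artanh |zeta| = (1/2) log((1+|zeta|)/(1-|zeta|)).\<close>
definition lempert :: "(complex^'n) set \<Rightarrow> complex^'n \<Rightarrow> complex^'n \<Rightarrow> real" where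
  "lempert \<Omega> z w = Inf {artanh (cmod \<zeta>) | \<zeta> f. \<zeta> \<in> ball 0 1 \<and> f \<in> analytic_discs \<Omega> \<and> f 0 = z \<and> f \<zeta> = w}"

definition kobayashi :: "(complex^'n) set \<Rightarrow> complex^'n \<Rightarrow> complex^'n \<Rightarrow> real" where
  "kobayashi \<Omega> z w = Inf {(\<Sum>i<m. lempert \<Omega> (p i) (p (Suc i))) | m p.
      p 0 = z \<and> p m = w \<and> (\<forall>i\<le>m. p i \<in> \<Omega>)}"

definition kobayashi_hyperbolic :: "(complex^'n) set \<Rightarrow> bool" where
  "kobayashi_hyperbolic \<Omega> \<longleftrightarrow>
     (\<forall>z\<in>\<Omega>. \<forall>w\<in>\<Omega>. z \<noteq> w \<longrightarrow> kobayashi \<Omega> z w > 0)"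

definition complete_kobayashi_hyperbolic :: "(complex^'n) set \<Rightarrow> bool" where
  "complete_kobayashi_hyperbolic \<Omega> \<longleftrightarrow> kobayashi_hyperbolic \<Omega> \<and>
     (\<forall>\<sigma>. (\<forall>n. \<sigma> n \<in> \<Omega>) \<and>
          (\<forall>e>0. \<exists>N. \<forall>m\<ge>N. \<forall>n\<ge>N. kobayashi \<Omega> (\<sigma> m) (\<sigma> n) < e)
        \<longrightarrow> (\<exists>p\<in>\<Omega>. (\<lambda>n. kobayashi \<Omega> (\<sigma> n) p) \<longlonglongrightarrow> 0))"

definition geodesic_ray :: "(complex^'n) set \<Rightarrow> (real \<Rightarrow> complex^'n) \<Rightarrow> bool" where
  "geodesic_ray \<Omega> \<gamma> \<longleftrightarrow> (\<forall>t\<ge>0. \<gamma> t \<in> \<Omega>) \<and>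
     (\<forall>s\<ge>0. \<forall>t\<ge>0. kobayashi \<Omega> (\<gamma> s) (\<gamma> t) = \<bar>s - t\<bar>)"

definition big_horoball :: "(complex^'n) set \<Rightarrow> complex^'n \<Rightarrow> complex^'n \<Rightarrow> real \<Rightarrow> (complex^'n) set" where
  "big_horoball \<Omega> b x R = {z \<in> \<Omega>.
     Liminf (at x within \<Omega>) (\<lambda>w. ereal (kobayashi \<Omega> z w - kobayashi \<Omega> b w)) < ereal (ln R / 2)}"

end

theory Submission
  imports Defs "HOL-Complex_Analysis.Riemann_Mapping"
begin

text \<open>Along the ray, the triangle inequality gives
  \<open>k(\<gamma> r, \<gamma> t) - k(b, \<gamma> t) \<le> k(\<gamma> 0, b) - r\<close> for all \<open>t \<ge> r\<close>; letting \<open>\<gamma>(t\<^sub>n) \<rightarrow> x\<close> bounds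
  the liminf defining the horoball, so \<open>\<gamma> r\<close> lies in every horoball at \<open>x\<close> once \<open>r\<close> is large.
  Hence \<open>y = lim \<gamma>(s\<^sub>n)\<close> lies in its closure.
  The only subtlety is the triangle inequality itself: with the definitions used here the
  Lempert function is an arbitrary real \<open>Inf {}\<close> where no disc joins two points, and its
  nonnegativity has to be derived from \<open>k(\<gamma> 0, \<gamma> 0) = 0\<close>.\<close>

lemma sum_lessThan_add:
  fixes f :: "nat \<Rightarrow> 'a::comm_monoid_add"
  shows "(\<Sum>i<m + n. f i) = (\<Sum>i<m. f i) + (\<Sum>i<n. f (m + i))"
  by (induction n) (simp_all add: add.assoc)

lemma Inf_real_not_bdd_below:
  fixes X :: "real set"
  assumes "\<not> bdd_below X"
  shows "Inf X = Inf {}"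
proof -
  have "(\<lambda>z. \<forall>x\<in>uminus ` X. x \<le> z) = (\<lambda>_. False)"
    using assms by (auto simp: bdd_below_def fun_eq_iff) (metis minus_le_iff)
  moreover have "(\<lambda>z::real. \<forall>y. z \<le> y) = (\<lambda>_. False)"
    by (auto simp: fun_eq_iff) (metis linorder_not_le lt_ex)
  ultimately show ?thesis
    by (simp add: Inf_real_def Sup_real_def Least_def)
qed

lemma not_bdd_below_arithmetic_progression:
  fixes X :: "real set"
  assumes "\<And>n. a + real n * d \<in> X" and "d < 0"
  shows "\<not> bdd_below X"
proof
  assume "bdd_below X"
  then obtain B where B: "\<And>x. x \<in> X \<Longrightarrow> B \<le> x"
    unfolding bdd_below_def by blast
  obtain n :: nat where "(a - B) / (- d) < real n"
    using reals_Archimedean2 by blast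
  then have "a + real n * d < B"
    using \<open>d < 0\<close> by (simp add: field_simps)
  with B assms(1) show False
    by (meson not_le)
qed

lemma cInf_le_add:
  fixes A B C :: "real set"
  assumes "A \<noteq> {}" and "B \<noteq> {}" and "bdd_below C"
    and "\<And>a b. a \<in> A \<Longrightarrow> b \<in> B \<Longrightarrow> a + b \<in> C"
  shows "Inf C \<le> Inf A + Inf B"
proof -
  have "Inf C - Inf B \<le> a" if "a \<in> A" for a
  proof -
    have "Inf C - a \<le> b" if "b \<in> B" for b
      using cInf_lower[OF assms(4)[OF \<open>a \<in> A\<close> that] assms(3)] by simp
    then have "Inf C - a \<le> Inf B"
      using assms(2) by (intro cInf_greatest)
    then show ?thesis
      by simp
  qed
  then have "Inf C - Inf B \<le> Inf A"
    using assms(1) by (intro cInf_greatest)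
  then show ?thesis
    by simp
qed

lemma artanh_nonneg:
  fixes x :: real
  assumes "0 \<le> x" and "x < 1"
  shows "0 \<le> artanh x"
  using assms unfolding artanh_def by (auto intro!: ln_ge_zero simp: field_simps)

lemma analytic_disc_swap:
  assumes f: "f \<in> analytic_discs \<Omega>" and \<zeta>: "\<zeta> \<in> ball 0 1"
  obtains g where "g \<in> analytic_discs \<Omega>" and "g 0 = f \<zeta>" and "g \<zeta> = f 0"
proof
  define \<phi> where "\<phi> = (\<lambda>\<eta>. - Moebius_function 0 \<zeta> \<eta>)"
  have "norm \<zeta> < 1"
    using \<zeta> by simp
  then have \<phi>_hol: "\<phi> holomorphic_on ball 0 1" and \<phi>_disc: "\<phi> ` ball 0 1 \<subseteq> ball 0 1"
    unfolding \<phi>_def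
    by (auto intro!: holomorphic_intros Moebius_function_holomorphic
        dest: Moebius_function_norm_lt_1)
  have "(\<lambda>\<eta>. (f \<circ> \<phi>) \<eta> $ i) holomorphic_on ball 0 1" for i
    using holomorphic_on_compose_gen[OF \<phi>_hol _ \<phi>_disc, of "\<lambda>\<eta>. f \<eta> $ i"] f
    by (simp add: analytic_discs_def o_def)
  moreover have "(f \<circ> \<phi>) ` ball 0 1 \<subseteq> \<Omega>"
    using f \<phi>_disc by (auto simp: analytic_discs_def)
  ultimately show "f \<circ> \<phi> \<in> analytic_discs \<Omega>"
    by (simp add: analytic_discs_def)
  show "(f \<circ> \<phi>) 0 = f \<zeta>" and "(f \<circ> \<phi>) \<zeta> = f 0"
    by (simp_all add: \<phi>_def Moebius_function_of_zero Moebius_function_eq_zero)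
qed

definition lempert_lengths :: "(complex^'n) set \<Rightarrow> complex^'n \<Rightarrow> complex^'n \<Rightarrow> real set" where
  "lempert_lengths \<Omega> z w = {artanh (cmod \<zeta>) | \<zeta> f.
      \<zeta> \<in> ball 0 1 \<and> f \<in> analytic_discs \<Omega> \<and> f 0 = z \<and> f \<zeta> = w}"

lemma lempert_eq_Inf: "lempert \<Omega> z w = Inf (lempert_lengths \<Omega> z w)"
  by (simp add: lempert_def lempert_lengths_def)

lemma lempert_lengths_commute: "lempert_lengths \<Omega> z w = lempert_lengths \<Omega> w z"
proof -
  have "lempert_lengths \<Omega> z w \<subseteq> lempert_lengths \<Omega> w z" for z w
  proof
    fix l assume "l \<in> lempert_lengths \<Omega> z w"
    then obtain \<zeta> f where l: "l = artanh (cmod \<zeta>)" and \<zeta>: "\<zeta> \<in> ball 0 1"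
      and f: "f \<in> analytic_discs \<Omega>" "f 0 = z" "f \<zeta> = w"
      by (auto simp: lempert_lengths_def)
    obtain g where "g \<in> analytic_discs \<Omega>" "g 0 = w" "g \<zeta> = z"
      using analytic_disc_swap[OF f(1) \<zeta>] f(2,3) by metis
    with l \<zeta> show "l \<in> lempert_lengths \<Omega> w z"
      by (auto simp: lempert_lengths_def)
  qed
  then show ?thesis
    by blast
qed

lemma lempert_commute: "lempert \<Omega> z w = lempert \<Omega> w z"
  by (simp add: lempert_eq_Inf lempert_lengths_commute)

lemma lempert_nonneg_if_joined:
  assumes "lempert_lengths \<Omega> z w \<noteq> {}"
  shows "0 \<le> lempert \<Omega> z w"
  unfolding lempert_eq_Inf using assms
  by (intro cInf_greatest)
    (auto simp: lempert_lengths_def intro!: artanh_nonneg)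

definition kobayashi_chain_lengths ::
    "(complex^'n) set \<Rightarrow> complex^'n \<Rightarrow> complex^'n \<Rightarrow> real set" where
  "kobayashi_chain_lengths \<Omega> z w = {(\<Sum>i<m. lempert \<Omega> (p i) (p (Suc i))) | m p.
      p 0 = z \<and> p m = w \<and> (\<forall>i\<le>m. p i \<in> \<Omega>)}"

lemma kobayashi_eq_Inf: "kobayashi \<Omega> z w = Inf (kobayashi_chain_lengths \<Omega> z w)"
  by (simp add: kobayashi_def kobayashi_chain_lengths_def)

lemma lempert_in_kobayashi_chain_lengths:
  assumes "z \<in> \<Omega>" and "w \<in> \<Omega>"
  shows "lempert \<Omega> z w \<in> kobayashi_chain_lengths \<Omega> z w"
  unfolding kobayashi_chain_lengths_def using assms
  by (intro CollectI exI[of _ 1] exI[of _ "\<lambda>i. if i = 0 then z else w"]) auto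

lemma kobayashi_chain_lengths_add:
  assumes "a \<in> kobayashi_chain_lengths \<Omega> z u" and "b \<in> kobayashi_chain_lengths \<Omega> u w"
  shows "a + b \<in> kobayashi_chain_lengths \<Omega> z w"
proof -
  obtain m p where a: "a = (\<Sum>i<m. lempert \<Omega> (p i) (p (Suc i)))"
    and p: "p 0 = z" "p m = u" "\<forall>i\<le>m. p i \<in> \<Omega>"
    using assms(1) by (auto simp: kobayashi_chain_lengths_def)
  obtain n q where b: "b = (\<Sum>i<n. lempert \<Omega> (q i) (q (Suc i)))"
    and q: "q 0 = u" "q n = w" "\<forall>i\<le>n. q i \<in> \<Omega>"
    using assms(2) by (auto simp: kobayashi_chain_lengths_def)
  define r where "r = (\<lambda>i. if i \<le> m then p i else q (i - m))"
  have "(\<Sum>i<m. lempert \<Omega> (r i) (r (Suc i))) = a"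
    unfolding a by (rule sum.cong) (auto simp: r_def)
  moreover have "(\<Sum>i<n. lempert \<Omega> (r (m + i)) (r (Suc (m + i)))) = b"
    unfolding b by (rule sum.cong) (auto simp: r_def p q Suc_diff_le)
  ultimately have "(\<Sum>i<m + n. lempert \<Omega> (r i) (r (Suc i))) = a + b"
    by (simp only: sum_lessThan_add)
  moreover have "r 0 = z" "r (m + n) = w" "\<forall>i\<le>m + n. r i \<in> \<Omega>"
    using p q by (auto simp: r_def)
  ultimately show ?thesis
    unfolding kobayashi_chain_lengths_def
    by (intro CollectI exI[of _ "m + n"] exI[of _ r]) auto
qed

lemma kobayashi_chain_lengths_add_loops:
  assumes "a \<in> kobayashi_chain_lengths \<Omega> z u" and "l \<in> kobayashi_chain_lengths \<Omega> u u"
  shows "a + real n * l \<in> kobayashi_chain_lengths \<Omega> z u"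
proof (induction n)
  case 0
  then show ?case
    using assms(1) by simp
next
  case (Suc n)
  then show ?case
    using kobayashi_chain_lengths_add[OF Suc assms(2)] by (simp add: algebra_simps)
qed

text \<open>If no disc joins \<open>z\<close> and \<open>w\<close>, then \<open>lempert \<Omega> z w = lempert \<Omega> w z = Inf {}\<close>. Were this
  negative, running back and forth between \<open>z\<close> and \<open>w\<close> would make the chains from \<open>p\<close> to \<open>p\<close>
  unbounded below, so \<open>kobayashi \<Omega> p p\<close> would be the same negative junk value.\<close>

lemma lempert_nonneg:
  assumes p: "p \<in> \<Omega>" "0 \<le> kobayashi \<Omega> p p" and z: "z \<in> \<Omega>" and w: "w \<in> \<Omega>"
  shows "0 \<le> lempert \<Omega> z w"
proof (cases "lempert_lengths \<Omega> z w = {}")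
  case False
  then show ?thesis
    by (rule lempert_nonneg_if_joined)
next
  case True
  then have junk: "lempert \<Omega> z w = Inf {}"
    by (simp add: lempert_eq_Inf)
  show ?thesis
  proof (rule ccontr)
    assume neg: "\<not> 0 \<le> lempert \<Omega> z w"
    have "lempert \<Omega> z w + lempert \<Omega> w z \<in> kobayashi_chain_lengths \<Omega> z z"
      using z w by (intro kobayashi_chain_lengths_add[where u = w] lempert_in_kobayashi_chain_lengths)
    then have loop: "2 * lempert \<Omega> z w \<in> kobayashi_chain_lengths \<Omega> z z"
      by (simp add: lempert_commute[of \<Omega> w z])
    have "lempert \<Omega> p z + real n * (2 * lempert \<Omega> z w) + lempert \<Omega> z p
        \<in> kobayashi_chain_lengths \<Omega> p p" for n
      using kobayashi_chain_lengths_add_loops[OF lempert_in_kobayashi_chain_lengths[OF p(1) z] loop]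
        lempert_in_kobayashi_chain_lengths[OF z p(1)]
      by (rule kobayashi_chain_lengths_add)
    then have "\<not> bdd_below (kobayashi_chain_lengths \<Omega> p p)"
      using neg by (intro not_bdd_below_arithmetic_progression[where
          a = "lempert \<Omega> p z + lempert \<Omega> z p" and d = "2 * lempert \<Omega> z w"])
        (simp_all add: ac_simps)
    then have "kobayashi \<Omega> p p = lempert \<Omega> z w"
      by (simp add: kobayashi_eq_Inf junk Inf_real_not_bdd_below)
    with p neg show False
      by simp
  qed
qed

lemma kobayashi_triangle:
  assumes nonneg: "\<And>z w. z \<in> \<Omega> \<Longrightarrow> w \<in> \<Omega> \<Longrightarrow> 0 \<le> lempert \<Omega> z w"
    and "z \<in> \<Omega>" and "u \<in> \<Omega>" and "w \<in> \<Omega>"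
  shows "kobayashi \<Omega> z w \<le> kobayashi \<Omega> z u + kobayashi \<Omega> u w"
proof -
  have "bdd_below (kobayashi_chain_lengths \<Omega> z w)"
    unfolding kobayashi_chain_lengths_def bdd_below_def
    by (auto intro!: exI[of _ 0] sum_nonneg nonneg)
  then show ?thesis
    unfolding kobayashi_eq_Inf using assms
    by (intro cInf_le_add kobayashi_chain_lengths_add) (auto dest: lempert_in_kobayashi_chain_lengths)
qed

lemma geodesic_ray_kobayashi_triangle:
  assumes "geodesic_ray \<Omega> \<gamma>" and "z \<in> \<Omega>" and "u \<in> \<Omega>" and "w \<in> \<Omega>"
  shows "kobayashi \<Omega> z w \<le> kobayashi \<Omega> z u + kobayashi \<Omega> u w"
proof (rule kobayashi_triangle)
  have "\<gamma> 0 \<in> \<Omega>" and "kobayashi \<Omega> (\<gamma> 0) (\<gamma> 0) = 0"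
    using assms(1) by (auto simp: geodesic_ray_def)
  then show "0 \<le> lempert \<Omega> a c" if "a \<in> \<Omega>" "c \<in> \<Omega>" for a c
    using that by (intro lempert_nonneg[of "\<gamma> 0"]) auto
qed (use assms in auto)

lemma geodesic_ray_Liminf_le:
  assumes geo: "geodesic_ray \<Omega> \<gamma>" and "x \<notin> \<Omega>" and b: "b \<in> \<Omega>" and r: "r \<ge> 0"
    and t: "filterlim t at_top sequentially" and tx: "(\<lambda>n. \<gamma> (t n)) \<longlonglongrightarrow> x"
  shows "Liminf (at x within \<Omega>) (\<lambda>w. ereal (kobayashi \<Omega> (\<gamma> r) w - kobayashi \<Omega> b w))
    \<le> ereal (kobayashi \<Omega> (\<gamma> 0) b - r)"
proof (rule Liminf_least)
  fix P assume P: "eventually P (at x within \<Omega>)"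
  have \<gamma>_in: "\<gamma> a \<in> \<Omega>" if "a \<ge> 0" for a
    using geo that by (simp add: geodesic_ray_def)
  have \<gamma>_dist: "kobayashi \<Omega> (\<gamma> a) (\<gamma> c) = \<bar>a - c\<bar>" if "a \<ge> 0" "c \<ge> 0" for a c
    using geo that by (simp add: geodesic_ray_def)
  have "filterlim (\<lambda>n. \<gamma> (t n)) (at x within \<Omega>) sequentially"
  proof (rule filterlim_at_withinI[OF tx])
    have "eventually (\<lambda>n. t n \<ge> 0) sequentially"
      using t by (simp add: filterlim_at_top)
    then show "eventually (\<lambda>n. \<gamma> (t n) \<in> \<Omega> - {x}) sequentially"
      by eventually_elim (use \<gamma>_in \<open>x \<notin> \<Omega>\<close> in auto)
  qed
  then have "eventually (\<lambda>n. P (\<gamma> (t n))) sequentially"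
    using P by (simp add: filterlim_iff)
  moreover have "eventually (\<lambda>n. t n \<ge> r) sequentially"
    using t by (simp add: filterlim_at_top)
  ultimately have "eventually (\<lambda>n. P (\<gamma> (t n)) \<and> t n \<ge> r) sequentially"
    by (rule eventually_conj)
  then obtain n where n: "P (\<gamma> (t n))" "t n \<ge> r"
    using eventually_happens'[OF sequentially_bot] by blast
  have tn: "t n \<ge> 0"
    using n(2) r by linarith
  have "kobayashi \<Omega> (\<gamma> 0) (\<gamma> (t n)) \<le> kobayashi \<Omega> (\<gamma> 0) b + kobayashi \<Omega> b (\<gamma> (t n))"
    using geodesic_ray_kobayashi_triangle[OF geo \<gamma>_in[of 0] b \<gamma>_in[OF tn]] by simp
  moreover have "kobayashi \<Omega> (\<gamma> 0) (\<gamma> (t n)) = t n"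
    using \<gamma>_dist[of 0 "t n"] tn by simp
  moreover have "kobayashi \<Omega> (\<gamma> r) (\<gamma> (t n)) = t n - r"
    using \<gamma>_dist[OF r tn] n(2) by simp
  ultimately have le: "ereal (kobayashi \<Omega> (\<gamma> r) (\<gamma> (t n)) - kobayashi \<Omega> b (\<gamma> (t n)))
      \<le> ereal (kobayashi \<Omega> (\<gamma> 0) b - r)"
    by simp
  show "(INF w\<in>Collect P. ereal (kobayashi \<Omega> (\<gamma> r) w - kobayashi \<Omega> b w))
      \<le> ereal (kobayashi \<Omega> (\<gamma> 0) b - r)"
    using n(1) le by (intro INF_lower2[of "\<gamma> (t n)"]) simp_all
qed

lemma geodesic_ray_limit_in_closure_big_horoball:
  assumes geo: "geodesic_ray \<Omega> \<gamma>" and "x \<notin> \<Omega>" and "b \<in> \<Omega>"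
    and "filterlim t at_top sequentially" and "(\<lambda>n. \<gamma> (t n)) \<longlonglongrightarrow> x"
    and s: "filterlim s at_top sequentially" and sy: "(\<lambda>n. \<gamma> (s n)) \<longlonglongrightarrow> y"
  shows "y \<in> closure (big_horoball \<Omega> b x R)"
proof -
  define r\<^sub>0 where "r\<^sub>0 = max 0 (kobayashi \<Omega> (\<gamma> 0) b - ln R / 2 + 1)"
  have "\<gamma> r \<in> big_horoball \<Omega> b x R" if "r \<ge> r\<^sub>0" for r
  proof -
    have "r \<ge> 0" and "kobayashi \<Omega> (\<gamma> 0) b - r < ln R / 2"
      using that by (auto simp: r\<^sub>0_def)
    then show ?thesis
      using geodesic_ray_Liminf_le[OF geo assms(2,3) \<open>r \<ge> 0\<close> assms(4,5)] geo
      by (auto simp: big_horoball_def geodesic_ray_def intro: order.strict_trans1)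
  qed
  moreover have "eventually (\<lambda>n. s n \<ge> r\<^sub>0) sequentially"
    using s by (simp add: filterlim_at_top)
  ultimately have "eventually (\<lambda>n. \<gamma> (s n) \<in> closure (big_horoball \<Omega> b x R)) sequentially"
    by (auto elim!: eventually_mono intro: closure_subset[THEN subsetD])
  then show ?thesis
    by (rule Lim_in_closed_set[OF closed_closure _ _ sy]) simp
qed

theorem lemma3p3:
  fixes \<Omega> :: "(complex^'n) set" and \<gamma> :: "real \<Rightarrow> complex^'n"
    and x y :: "complex^'n" and t s :: "nat \<Rightarrow> real"
  assumes "domain \<Omega>" and "complete_kobayashi_hyperbolic \<Omega>"
    and "geodesic_ray \<Omega> \<gamma>"
    and "x \<in> frontier \<Omega>" and "y \<in> frontier \<Omega>"
    and "filterlim t at_top sequentially" and "filterlim s at_top sequentially"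
    and "(\<lambda>n. \<gamma> (t n)) \<longlonglongrightarrow> x" and "(\<lambda>n. \<gamma> (s n)) \<longlonglongrightarrow> y"
  shows "(\<forall>R>0. \<forall>b\<in>\<Omega>. y \<in> closure (big_horoball \<Omega> b x R))
       \<and> (\<forall>R>0. \<forall>b\<in>\<Omega>. x \<in> closure (big_horoball \<Omega> b x R))"
proof -
  have "x \<notin> \<Omega>"
    using assms(1,4) by (simp add: domain_def frontier_def interior_open)
  then show ?thesis
    using geodesic_ray_limit_in_closure_big_horoball[OF assms(3) _ _ assms(6,8,7,9)]
      geodesic_ray_limit_in_closure_big_horoball[OF assms(3) _ _ assms(6,8,6,8)]
    by blast
qed

end
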